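(* Let $A=\mathrm{Sym}(\mathrm{Sym}^2(\mathbb{C}^\infty))=\mathbb{C}[x_{i,j}]$, $K=\mathrm{Frac}(A)$, and $\mathfrak{m}$ the ideal generated by $x_{i,i}-1$ and $x_{i,j}$ ($i\ne j$). If $M$ is an $A$-module with $M\otimes_AK=0$, then $M/\mathfrak{m}M=0$.
   Context: An $A$-module is an $A$-module with a compatible action of $\mathrm{GL}_\infty=\bigcup_n\mathrm{GL}_n$ making it a polynomial representation (subquotient of a direct sum of tensor powers of $\mathbb{C}^\infty$). $x_{i,j}=e_ie_j$. *)

theory Defs
  imports Complex_Main "HOL-Library.Poly_Mapping"
begin

text \<open>Variables x_{i,j} = x_{j,i} are indexed by pairs (i,j) with i <= j.\<close>
typedef sym2 = "{p :: nat \<times> nat. fst p \<le> snd p}"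
  by auto

text \<open>Polynomial ring in the variables x_{i,j} (i <= j): finitely supported
  functions from monomials (finitely supported exponent vectors) to C.\<close>
type_synonym polyA = "(sym2 \<Rightarrow>\<^sub>0 nat) \<Rightarrow>\<^sub>0 complex"

definition constA :: "complex \<Rightarrow> polyA" where
  "constA c = Poly_Mapping.single 0 c"

definition xvar :: "nat \<Rightarrow> nat \<Rightarrow> polyA" where
  "xvar i j = Poly_Mapping.single (Poly_Mapping.single (Abs_sym2 (min i j, max i j)) 1) 1"

text \<open>Infinite matrices (entry g i j: row i, column j) that agree with the identity
  outside the block {0..<n} x {0..<n}.\<close>
definition id_outside :: "nat \<Rightarrow> (nat \<Rightarrow> nat \<Rightarrow> complex) \<Rightarrow> bool" where
  "id_outside n g \<longleftrightarrow> (\<forall>i j. (n \<le> i \<or> n \<le> j) \<longrightarrow> g i j = (if i = j then 1 else 0))"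

definition GLinf :: "(nat \<Rightarrow> nat \<Rightarrow> complex) set" where
  "GLinf = {g. \<exists>n. id_outside n g \<and> (\<exists>h. id_outside n h \<and>
       (\<forall>i<n. \<forall>j<n. (\<Sum>k<n. g i k * h k j) = (if i = j then 1 else 0)))}"

text \<open>Matrix product (the sum is finite for elements of GLinf).\<close>
definition gmul :: "(nat \<Rightarrow> nat \<Rightarrow> complex) \<Rightarrow> (nat \<Rightarrow> nat \<Rightarrow> complex) \<Rightarrow> nat \<Rightarrow> nat \<Rightarrow> complex" where
  "gmul g h i j = (\<Sum>k\<in>{k. g i k * h k j \<noteq> 0}. g i k * h k j)"

definition gone :: "nat \<Rightarrow> nat \<Rightarrow> complex" where
  "gone i j = (if i = j then 1 else 0)"

text \<open>g . x_{i,j} = (g e_i)(g e_j) = sum_{k,l} g_{k,i} g_{l,j} x_{k,l}.\<close>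
definition gvar :: "(nat \<Rightarrow> nat \<Rightarrow> complex) \<Rightarrow> nat \<Rightarrow> nat \<Rightarrow> polyA" where
  "gvar g i j = (\<Sum>(k, l)\<in>{(k, l). g k i * g l j \<noteq> 0}. constA (g k i * g l j) * xvar k l)"

definition gactA :: "(nat \<Rightarrow> nat \<Rightarrow> complex) \<Rightarrow> polyA \<Rightarrow> polyA" where
  "gactA g p = (\<Sum>\<mu>\<in>Poly_Mapping.keys p. constA (Poly_Mapping.lookup p \<mu>) *
      (\<Prod>v\<in>Poly_Mapping.keys \<mu>. (case Rep_sym2 v of (i, j) \<Rightarrow> gvar g i j) ^ Poly_Mapping.lookup \<mu> v))"

text \<open>For an index type 't and degrees deg :: 't => nat, the direct sum
  (+)_{t} T^{deg t}(C^infinity) is realized inside ('t x nat list) =>0 C: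
  the basis vector (t, [w_1,...,w_d]) stands for e_{w_1} (x) ... (x) e_{w_d}
  in the summand t.\<close>
definition tensum :: "('t \<Rightarrow> nat) \<Rightarrow> (('t \<times> nat list) \<Rightarrow>\<^sub>0 complex) set" where
  "tensum deg = {v. \<forall>(t, w)\<in>Poly_Mapping.keys v. length w = deg t}"

definition tscale :: "complex \<Rightarrow> ('b \<Rightarrow>\<^sub>0 complex) \<Rightarrow> ('b \<Rightarrow>\<^sub>0 complex)" where
  "tscale c v = Poly_Mapping.map (\<lambda>x. c * x) v"

text \<open>g (e_{w_1} (x) ... (x) e_{w_d}) = sum_u (prod_k g_{u_k,w_k}) e_{u_1} (x) ... (x) e_{u_d}.\<close>
definition tcoef :: "(nat \<Rightarrow> nat \<Rightarrow> complex) \<Rightarrow> nat list \<Rightarrow> nat list \<Rightarrow> complex" where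
  "tcoef g u w = (\<Prod>k<length w. g (u ! k) (w ! k))"

definition tact :: "(nat \<Rightarrow> nat \<Rightarrow> complex) \<Rightarrow> (('t \<times> nat list) \<Rightarrow>\<^sub>0 complex) \<Rightarrow> (('t \<times> nat list) \<Rightarrow>\<^sub>0 complex)" where
  "tact g v = (\<Sum>(t, w)\<in>Poly_Mapping.keys v.
      \<Sum>u\<in>{u. length u = length w \<and> tcoef g u w \<noteq> 0}.
         Poly_Mapping.single (t, u) (Poly_Mapping.lookup v (t, w) * tcoef g u w))"

definition compatible_GL_action ::
  "(polyA \<Rightarrow> 'm::ab_group_add \<Rightarrow> 'm) \<Rightarrow> ((nat \<Rightarrow> nat \<Rightarrow> complex) \<Rightarrow> 'm \<Rightarrow> 'm) \<Rightarrow> bool" where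
  "compatible_GL_action smult act \<longleftrightarrow>
     (\<forall>m. act gone m = m) \<and>
     (\<forall>g\<in>GLinf. \<forall>h\<in>GLinf. \<forall>m. act (gmul g h) m = act g (act h m)) \<and>
     (\<forall>g\<in>GLinf. \<forall>m m'. act g (m + m') = act g m + act g m') \<and>
     (\<forall>g\<in>GLinf. \<forall>c m. act g (smult (constA c) m) = smult (constA c) (act g m)) \<and>
     (\<forall>g\<in>GLinf. \<forall>a m. act g (smult a m) = smult (gactA g a) (act g m))"

text \<open>Polynomial representation: a subquotient of a direct sum of tensor powers of
  C^infinity, i.e. M is the image of a GL-stable C-subspace N of
  (+)_t T^{deg t}(C^infinity) under a surjective C-linear GL-equivariant map phi
  (so M = N / ker phi).\<close>
definition polynomial_rep_via ::
  "('t \<Rightarrow> nat) \<Rightarrow> (polyA \<Rightarrow> 'm::ab_group_add \<Rightarrow> 'm) \<Rightarrow> ((nat \<Rightarrow> nat \<Rightarrow> complex) \<Rightarrow> 'm \<Rightarrow> 'm) \<Rightarrow> bool" where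
  "polynomial_rep_via deg smult act \<longleftrightarrow>
     (\<exists>N phi. N \<subseteq> tensum deg \<and> 0 \<in> N \<and>
        (\<forall>v\<in>N. \<forall>v'\<in>N. v + v' \<in> N) \<and> (\<forall>c. \<forall>v\<in>N. tscale c v \<in> N) \<and>
        (\<forall>g\<in>GLinf. \<forall>v\<in>N. tact g v \<in> N) \<and>
        (\<forall>v\<in>N. \<forall>v'\<in>N. phi (v + v') = phi v + phi v') \<and>
        (\<forall>c. \<forall>v\<in>N. phi (tscale c v) = smult (constA c) (phi v)) \<and>
        (\<forall>g\<in>GLinf. \<forall>v\<in>N. phi (tact g v) = act g (phi v)) \<and>
        phi ` N = (UNIV :: 'm set))"

text \<open>M (x)_A K is the localization S^{-1} M, S = A - {0}: pairs (m, s) modulo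
  (m,s) ~ (m',s') iff u (s' m - s m') = 0 for some u in S.\<close>
definition loc_rel :: "(polyA \<Rightarrow> 'm::ab_group_add \<Rightarrow> 'm) \<Rightarrow> 'm \<times> polyA \<Rightarrow> 'm \<times> polyA \<Rightarrow> bool" where
  "loc_rel smult p q \<longleftrightarrow> (case p of (m, s) \<Rightarrow> case q of (m', s') \<Rightarrow>
      (\<exists>u. u \<noteq> 0 \<and> smult u (smult s' m - smult s m') = 0))"

definition tensor_frac_zero :: "(polyA \<Rightarrow> 'm::ab_group_add \<Rightarrow> 'm) \<Rightarrow> bool" where
  "tensor_frac_zero smult \<longleftrightarrow> (\<forall>m s. s \<noteq> 0 \<longrightarrow> loc_rel smult (m, s) (0, 1))"

definition max_ideal :: "polyA set" where
  "max_ideal = module.span ((*) :: polyA \<Rightarrow> polyA \<Rightarrow> polyA)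
      ({xvar i i - 1 | i. True} \<union> {xvar i j | i j. i \<noteq> j})"

definition ideal_times :: "(polyA \<Rightarrow> 'm::ab_group_add \<Rightarrow> 'm) \<Rightarrow> polyA set \<Rightarrow> 'm set" where
  "ideal_times smult I = module.span smult {smult a m | a m. a \<in> I}"

end

theory Submission
  imports Defs "HOL-Computational_Algebra.Polynomial"
begin

text \<open>Let \<open>m \<in> M\<close>. Since \<open>M \<otimes>\<^sub>A K = 0\<close>, some \<open>u \<noteq> 0\<close> in \<open>A\<close> kills \<open>m\<close>.
  If \<open>u\<close> does not vanish at the identity matrix (\<open>x\<^sub>i\<^sub>j = \<delta>\<^sub>i\<^sub>j\<close>), then \<open>u\<close> is a
  nonzero constant modulo \<open>\<mathfrak>m\<close>, so \<open>m \<in> \<mathfrak>m M\<close>. In general we move \<open>m\<close> along a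
  curve \<open>g\<^sub>t\<close> in \<open>GL\<^sub>\<infinity>\<close> of upper triangular matrices, polynomial in \<open>t\<close>, with
  \<open>g\<^sub>1 = 1\<close>. Then \<open>g\<^sub>t m\<close> is killed by \<open>g\<^sub>t u\<close>, whose value at the identity is
  \<open>u(g\<^sub>t\<^sup>T g\<^sub>t)\<close>, a polynomial in \<open>t\<close>; a Kronecker substitution in the exponents
  of \<open>g\<^sub>t\<close> makes the monomials of \<open>u\<close> contribute distinct leading degrees, so this
  polynomial is nonzero and \<open>g\<^sub>t m \<in> \<mathfrak>m M\<close> for all but finitely many \<open>t\<close>.
  Finally, \<open>M\<close> being polynomial, \<open>t \<mapsto> g\<^sub>t m\<close> is a polynomial map of bounded degree,
  and Lagrange interpolation writes \<open>m = g\<^sub>1 m\<close> as a linear combination of such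
  \<open>g\<^sub>t m\<close>.\<close>

section \<open>Evaluation of polynomials in A\<close>

definition coeff_hom :: "(complex \<Rightarrow> 'a::comm_ring_1) \<Rightarrow> bool" where
  "coeff_hom \<phi> \<longleftrightarrow> \<phi> 0 = 0 \<and> \<phi> 1 = 1 \<and> (\<forall>a b. \<phi> (a + b) = \<phi> a + \<phi> b) \<and> (\<forall>a b. \<phi> (a * b) = \<phi> a * \<phi> b)"

definition monomial_value :: "(sym2 \<Rightarrow> 'a::comm_ring_1) \<Rightarrow> (sym2 \<Rightarrow>\<^sub>0 nat) \<Rightarrow> 'a" where
  "monomial_value x \<mu> = (\<Prod>v\<in>Poly_Mapping.keys \<mu>. x v ^ Poly_Mapping.lookup \<mu> v)"

definition peval :: "(complex \<Rightarrow> 'a::comm_ring_1) \<Rightarrow> (sym2 \<Rightarrow> 'a) \<Rightarrow> polyA \<Rightarrow> 'a" where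
  "peval \<phi> x p = (\<Sum>\<mu>\<in>Poly_Mapping.keys p. \<phi> (Poly_Mapping.lookup p \<mu>) * monomial_value x \<mu>)"

lemma coeff_hom_id: "coeff_hom (\<lambda>c. c)"
  by (simp add: coeff_hom_def)

lemma coeff_homD:
  assumes "coeff_hom \<phi>"
  shows "\<phi> 0 = 0" "\<phi> 1 = 1" "\<phi> (a + b) = \<phi> a + \<phi> b" "\<phi> (a * b) = \<phi> a * \<phi> b"
  using assms by (auto simp: coeff_hom_def)

lemma monomial_value_superset:
  assumes "finite F" "Poly_Mapping.keys \<mu> \<subseteq> F"
  shows "monomial_value x \<mu> = (\<Prod>v\<in>F. x v ^ Poly_Mapping.lookup \<mu> v)"
  unfolding monomial_value_def
  by (rule prod.mono_neutral_left) (use assms in \<open>auto simp: in_keys_iff\<close>)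

lemma monomial_value_add: "monomial_value x (\<mu> + \<nu>) = monomial_value x \<mu> * monomial_value x \<nu>"
proof -
  let ?F = "Poly_Mapping.keys \<mu> \<union> Poly_Mapping.keys \<nu>"
  have "monomial_value x (\<mu> + \<nu>) = (\<Prod>v\<in>?F. x v ^ Poly_Mapping.lookup (\<mu> + \<nu>) v)"
    by (rule monomial_value_superset) (use keys_add[of \<mu> \<nu>] in auto)
  also have "\<dots> = (\<Prod>v\<in>?F. x v ^ Poly_Mapping.lookup \<mu> v) * (\<Prod>v\<in>?F. x v ^ Poly_Mapping.lookup \<nu> v)"
    by (simp add: lookup_add power_add prod.distrib)
  also have "\<dots> = monomial_value x \<mu> * monomial_value x \<nu>"
    by (subst (1 2) monomial_value_superset[where F = ?F]) auto
  finally show ?thesis .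
qed

lemma monomial_value_zero [simp]: "monomial_value x 0 = 1"
  by (simp add: monomial_value_def)

lemma monomial_value_single: "monomial_value x (Poly_Mapping.single v k) = x v ^ k"
  by (simp add: monomial_value_def)

lemma peval_zero [simp]: "peval \<phi> x 0 = 0"
  by (simp add: peval_def)

lemma poly_mapping_sum_single:
  "p = (\<Sum>\<mu>\<in>Poly_Mapping.keys p. Poly_Mapping.single \<mu> (Poly_Mapping.lookup p \<mu>))"
  by (rule poly_mapping_eqI) (simp add: lookup_sum lookup_single when_def in_keys_iff)

context
  fixes \<phi> :: "complex \<Rightarrow> 'a::comm_ring_1"
  assumes \<phi>: "coeff_hom \<phi>"
begin

lemma peval_superset:
  assumes "finite F" "Poly_Mapping.keys p \<subseteq> F"
  shows "peval \<phi> x p = (\<Sum>\<mu>\<in>F. \<phi> (Poly_Mapping.lookup p \<mu>) * monomial_value x \<mu>)"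
  unfolding peval_def
  by (rule sum.mono_neutral_left) (use assms \<phi> in \<open>auto simp: in_keys_iff coeff_homD\<close>)

lemma peval_add: "peval \<phi> x (p + q) = peval \<phi> x p + peval \<phi> x q"
proof -
  let ?F = "Poly_Mapping.keys p \<union> Poly_Mapping.keys q"
  have "peval \<phi> x (p + q) = (\<Sum>\<mu>\<in>?F. \<phi> (Poly_Mapping.lookup (p + q) \<mu>) * monomial_value x \<mu>)"
    by (rule peval_superset) (use keys_add[of p q] in auto)
  also have "\<dots> = (\<Sum>\<mu>\<in>?F. \<phi> (Poly_Mapping.lookup p \<mu>) * monomial_value x \<mu>)
      + (\<Sum>\<mu>\<in>?F. \<phi> (Poly_Mapping.lookup q \<mu>) * monomial_value x \<mu>)"
    by (simp add: lookup_add coeff_homD[OF \<phi>] distrib_right sum.distrib)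
  also have "\<dots> = peval \<phi> x p + peval \<phi> x q"
    by (subst (1 2) peval_superset[where F = ?F]) auto
  finally show ?thesis .
qed

lemma peval_sum: "peval \<phi> x (sum f A) = (\<Sum>a\<in>A. peval \<phi> x (f a))"
  by (induction A rule: infinite_finite_induct) (auto simp: peval_add)

lemma peval_single: "peval \<phi> x (Poly_Mapping.single \<mu> c) = \<phi> c * monomial_value x \<mu>"
  using \<phi> by (auto simp: peval_def coeff_homD)

lemma peval_constA: "peval \<phi> x (constA c) = \<phi> c"
  by (simp add: constA_def peval_single)

lemma peval_one: "peval \<phi> x 1 = 1"
  using peval_constA[of x 1] by (simp add: constA_def coeff_homD[OF \<phi>])

lemma peval_mult: "peval \<phi> x (p * q) = peval \<phi> x p * peval \<phi> x q"
proof -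
  have "p * q = (\<Sum>\<mu>\<in>Poly_Mapping.keys p. \<Sum>\<nu>\<in>Poly_Mapping.keys q.
      Poly_Mapping.single \<mu> (Poly_Mapping.lookup p \<mu>) * Poly_Mapping.single \<nu> (Poly_Mapping.lookup q \<nu>))"
    by (subst (1) poly_mapping_sum_single[of p], subst (1) poly_mapping_sum_single[of q])
      (simp add: sum_distrib_left sum_distrib_right sum.swap[of _ "Poly_Mapping.keys q"])
  then have "peval \<phi> x (p * q) = (\<Sum>\<mu>\<in>Poly_Mapping.keys p. \<Sum>\<nu>\<in>Poly_Mapping.keys q.
      \<phi> (Poly_Mapping.lookup p \<mu>) * monomial_value x \<mu> * (\<phi> (Poly_Mapping.lookup q \<nu>) * monomial_value x \<nu>))"
    by (simp add: peval_sum mult_single peval_single monomial_value_add coeff_homD[OF \<phi>] ac_simps)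
  also have "\<dots> = peval \<phi> x p * peval \<phi> x q"
    by (simp add: peval_def sum_distrib_left sum_distrib_right sum.swap[of _ "Poly_Mapping.keys q"])
  finally show ?thesis .
qed

lemma peval_prod: "peval \<phi> x (prod f A) = (\<Prod>a\<in>A. peval \<phi> x (f a))"
  by (induction A rule: infinite_finite_induct) (auto simp: peval_mult peval_one)

lemma peval_power: "peval \<phi> x (p ^ k) = peval \<phi> x p ^ k"
  by (induction k) (auto simp: peval_mult peval_one)

end

lemma poly_peval_const_poly:
  "poly (peval (\<lambda>c. [:c:]) Q p) t = peval (\<lambda>c. c) (\<lambda>v. poly (Q v) t) p"
  by (simp add: peval_def monomial_value_def poly_sum poly_prod)

section \<open>Congruences modulo the ideal m\<close>

lemma module_mult: "module ((*) :: 'a::comm_ring_1 \<Rightarrow> 'a \<Rightarrow> 'a)"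
  by unfold_locales (auto simp: algebra_simps)

lemma max_ideal_add: "a \<in> max_ideal \<Longrightarrow> b \<in> max_ideal \<Longrightarrow> a + b \<in> max_ideal"
  unfolding max_ideal_def by (rule module.span_add[OF module_mult])

lemma max_ideal_mult: "a \<in> max_ideal \<Longrightarrow> c * a \<in> max_ideal"
  unfolding max_ideal_def by (rule module.span_scale[OF module_mult])

lemma max_ideal_zero: "0 \<in> max_ideal"
  unfolding max_ideal_def by (rule module.span_zero[OF module_mult])

lemma constA_add: "constA (a + b) = constA a + constA b"
  by (simp add: constA_def single_add)

lemma constA_mult: "constA (a * b) = constA a * constA b"
  by (simp add: constA_def mult_single)

lemma constA_one [simp]: "constA 1 = 1"
  by (simp add: constA_def)

lemma constA_zero [simp]: "constA 0 = 0"
  by (simp add: constA_def)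

definition cong_max_ideal :: "polyA \<Rightarrow> complex \<Rightarrow> bool" where
  "cong_max_ideal a c \<longleftrightarrow> a - constA c \<in> max_ideal"

lemma cong_max_ideal_const: "cong_max_ideal (constA c) c"
  by (simp add: cong_max_ideal_def max_ideal_zero)

lemma cong_max_ideal_add:
  "cong_max_ideal a \<alpha> \<Longrightarrow> cong_max_ideal b \<beta> \<Longrightarrow> cong_max_ideal (a + b) (\<alpha> + \<beta>)"
  unfolding cong_max_ideal_def using max_ideal_add[of "a - constA \<alpha>" "b - constA \<beta>"]
  by (simp add: constA_add algebra_simps)

lemma cong_max_ideal_mult:
  assumes "cong_max_ideal a \<alpha>" "cong_max_ideal b \<beta>"
  shows "cong_max_ideal (a * b) (\<alpha> * \<beta>)"
proof -
  have "a * b - constA (\<alpha> * \<beta>) = b * (a - constA \<alpha>) + constA \<alpha> * (b - constA \<beta>)"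
    by (simp add: constA_mult algebra_simps)
  then show ?thesis
    using assms unfolding cong_max_ideal_def by (metis max_ideal_add max_ideal_mult)
qed

lemma cong_max_ideal_sum:
  "(\<And>a. a \<in> A \<Longrightarrow> cong_max_ideal (f a) (g a)) \<Longrightarrow> cong_max_ideal (sum f A) (sum g A)"
  by (induction A rule: infinite_finite_induct)
    (auto simp: cong_max_ideal_def max_ideal_zero intro: cong_max_ideal_add[unfolded cong_max_ideal_def])

lemma cong_max_ideal_prod:
  "(\<And>a. a \<in> A \<Longrightarrow> cong_max_ideal (f a) (g a)) \<Longrightarrow> cong_max_ideal (prod f A) (prod g A)"
  by (induction A rule: infinite_finite_induct)
    (auto intro: cong_max_ideal_mult simp: cong_max_ideal_const[of 1, simplified])

lemma cong_max_ideal_power: "cong_max_ideal a \<alpha> \<Longrightarrow> cong_max_ideal (a ^ k) (\<alpha> ^ k)"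
  by (induction k) (auto intro: cong_max_ideal_mult simp: cong_max_ideal_const[of 1, simplified])

definition sym2_var :: "sym2 \<Rightarrow> polyA" where
  "sym2_var v = Poly_Mapping.single (Poly_Mapping.single v 1) 1"

lemma sym2_var_eq_xvar:
  assumes "Rep_sym2 v = (i, j)"
  shows "sym2_var v = xvar i j"
proof -
  have "i \<le> j" using assms Rep_sym2[of v] by auto
  then have "Abs_sym2 (min i j, max i j) = v" using assms Rep_sym2_inverse[of v] by auto
  then show ?thesis by (simp add: sym2_var_def xvar_def)
qed

lemma sym2_var_power: "sym2_var v ^ k = Poly_Mapping.single (Poly_Mapping.single v k) 1"
  by (induction k) (auto simp: sym2_var_def mult_single simp flip: single_add)

lemma prod_single_one:
  "(\<Prod>v\<in>F. Poly_Mapping.single (f v) (1::'b::comm_semiring_1)) = Poly_Mapping.single (\<Sum>v\<in>F. f v) 1"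
  by (induction F rule: infinite_finite_induct) (auto simp: mult_single)

lemma single_eq_constA_mult_monomial:
  "Poly_Mapping.single \<mu> c = constA c * (\<Prod>v\<in>Poly_Mapping.keys \<mu>. sym2_var v ^ Poly_Mapping.lookup \<mu> v)"
proof -
  have "(\<Prod>v\<in>Poly_Mapping.keys \<mu>. sym2_var v ^ Poly_Mapping.lookup \<mu> v)
        = Poly_Mapping.single (\<Sum>v\<in>Poly_Mapping.keys \<mu>. Poly_Mapping.single v (Poly_Mapping.lookup \<mu> v)) 1"
    by (simp add: sym2_var_power prod_single_one)
  also have "\<dots> = Poly_Mapping.single \<mu> 1"
    by (simp flip: poly_mapping_sum_single)
  finally show ?thesis by (simp add: constA_def mult_single)
qed

definition id_point :: "sym2 \<Rightarrow> complex" where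
  "id_point v = (if fst (Rep_sym2 v) = snd (Rep_sym2 v) then 1 else 0)"

definition eval_id :: "polyA \<Rightarrow> complex" where
  "eval_id p = peval (\<lambda>c. c) id_point p"

lemma cong_max_ideal_sym2_var: "cong_max_ideal (sym2_var v) (id_point v)"
proof -
  obtain i j where v: "Rep_sym2 v = (i, j)" by (cases "Rep_sym2 v")
  have "sym2_var v - constA (id_point v) \<in>
      {xvar i i - 1 | i. True} \<union> {xvar i j | i j. i \<noteq> j}"
    using v by (cases "i = j") (auto simp: sym2_var_eq_xvar id_point_def constA_def)
  then show ?thesis
    unfolding cong_max_ideal_def max_ideal_def by (rule module.span_base[OF module_mult])
qed

lemma cong_max_ideal_eval_id: "cong_max_ideal p (eval_id p)"
proof -
  have "p = (\<Sum>\<mu>\<in>Poly_Mapping.keys p. constA (Poly_Mapping.lookup p \<mu>) *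
      (\<Prod>v\<in>Poly_Mapping.keys \<mu>. sym2_var v ^ Poly_Mapping.lookup \<mu> v))"
    by (subst poly_mapping_sum_single) (simp add: single_eq_constA_mult_monomial)
  moreover have "cong_max_ideal \<dots> (\<Sum>\<mu>\<in>Poly_Mapping.keys p. Poly_Mapping.lookup p \<mu> *
      (\<Prod>v\<in>Poly_Mapping.keys \<mu>. id_point v ^ Poly_Mapping.lookup \<mu> v))"
    by (intro cong_max_ideal_sum cong_max_ideal_mult cong_max_ideal_const cong_max_ideal_prod
        cong_max_ideal_power cong_max_ideal_sym2_var)
  ultimately show ?thesis by (simp add: eval_id_def peval_def monomial_value_def)
qed

lemma in_ideal_times_max_ideal_if_annihilated:
  fixes smult :: "polyA \<Rightarrow> 'm::ab_group_add \<Rightarrow> 'm"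
  assumes M: "module smult" and ann: "smult p m = 0" and nonzero: "eval_id p \<noteq> 0"
  shows "m \<in> ideal_times smult max_ideal"
proof -
  define c where "c = eval_id p"
  define r where "r = constA (1 / c) * (p - constA c)"
  have r: "r \<in> max_ideal"
    using cong_max_ideal_eval_id[of p] by (simp add: cong_max_ideal_def r_def c_def max_ideal_mult)
  have "1 = constA (1 / c) * p - r"
    using nonzero by (simp add: r_def algebra_simps c_def flip: constA_mult)
  then have "m = smult (constA (1 / c) * p) m - smult r m"
    using M by (metis module.scale_left_diff_distrib module.scale_one)
  also have "\<dots> = - smult r m"
    using ann M by (simp add: module.scale_scale[OF M, symmetric] module.scale_zero_right)
  also have "\<dots> \<in> ideal_times smult max_ideal"
    unfolding ideal_times_def using r by (blast intro: module.span_neg[OF M] module.span_base[OF M])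
  finally show ?thesis .
qed

section \<open>Upper triangular matrices\<close>

lemma eval_id_gactA:
  "eval_id (gactA g p) = peval (\<lambda>c. c) (\<lambda>v. eval_id (case Rep_sym2 v of (i, j) \<Rightarrow> gvar g i j)) p"
proof -
  have "eval_id (gactA g p) = (\<Sum>\<mu>\<in>Poly_Mapping.keys p. Poly_Mapping.lookup p \<mu> *
      (\<Prod>v\<in>Poly_Mapping.keys \<mu>. eval_id (case Rep_sym2 v of (i, j) \<Rightarrow> gvar g i j) ^ Poly_Mapping.lookup \<mu> v))"
    unfolding gactA_def eval_id_def
    by (simp add: peval_sum[OF coeff_hom_id] peval_mult[OF coeff_hom_id] peval_constA[OF coeff_hom_id]
        peval_prod[OF coeff_hom_id] peval_power[OF coeff_hom_id])
  then show ?thesis by (simp add: peval_def monomial_value_def)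
qed

lemma eval_id_xvar: "eval_id (xvar k l) = (if k = l then 1 else 0)"
proof -
  have "Rep_sym2 (Abs_sym2 (min k l, max k l)) = (min k l, max k l)"
    by (rule Abs_sym2_inverse) auto
  then show ?thesis
    by (auto simp: eval_id_def xvar_def peval_single[OF coeff_hom_id] monomial_value_single id_point_def)
qed

lemma eval_id_gvar:
  assumes upper: "\<And>k i. g k i \<noteq> 0 \<Longrightarrow> k \<le> i"
  shows "eval_id (gvar g i j) = (\<Sum>k\<le>i. g k i * g k j)"
proof -
  let ?A = "{(k, l). g k i * g l j \<noteq> 0}"
  have sub: "?A \<subseteq> {..i} \<times> {..j}" using upper by fastforce
  have "eval_id (gvar g i j) = (\<Sum>(k, l)\<in>?A. g k i * g l j * (if k = l then 1 else 0))"
    unfolding gvar_def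
    by (simp add: eval_id_def peval_sum[OF coeff_hom_id] peval_mult[OF coeff_hom_id]
        peval_constA[OF coeff_hom_id] eval_id_xvar[unfolded eval_id_def] case_prod_beta)
  also have "\<dots> = (\<Sum>(k, l)\<in>{..i} \<times> {..j}. g k i * g l j * (if k = l then 1 else 0))"
    by (rule sum.mono_neutral_left) (use sub in auto)
  also have "\<dots> = (\<Sum>k\<le>i. if k \<le> j then g k i * g k j else 0)"
    by (simp add: sum.cartesian_product[symmetric] if_distrib sum.delta cong: if_cong)
  also have "\<dots> = (\<Sum>k\<le>i. g k i * g k j)"
    by (intro sum.cong refl) (use upper in force)
  finally show ?thesis .
qed

lemma upper_triangular_solvable:
  fixes g :: "nat \<Rightarrow> nat \<Rightarrow> 'a::field"
  assumes "\<And>i k. k < i \<Longrightarrow> i < n \<Longrightarrow> g i k = 0" and "\<And>i. i < n \<Longrightarrow> g i i \<noteq> 0"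
  shows "\<exists>x. \<forall>i<n. (\<Sum>k<n. g i k * x k) = b i"
  using assms
proof (induction n arbitrary: b)
  case 0
  then show ?case by simp
next
  case (Suc n)
  define y where "y = b n / g n n"
  obtain x where x: "\<forall>i<n. (\<Sum>k<n. g i k * x k) = b i - g i n * y"
    using Suc.IH[of "\<lambda>i. b i - g i n * y"] Suc.prems by auto
  have "(\<Sum>k<Suc n. g i k * (x(n := y)) k) = b i" if "i < Suc n" for i
  proof (cases "i < n")
    case True
    then show ?thesis using x by simp
  next
    case False
    then have "i = n" using that by simp
    then show ?thesis using Suc.prems by (simp add: y_def)
  qed
  then show ?case by blast
qed

lemma upper_triangular_right_inverse:
  fixes g :: "nat \<Rightarrow> nat \<Rightarrow> 'a::field"
  assumes "\<And>i k. k < i \<Longrightarrow> i < n \<Longrightarrow> g i k = 0" and "\<And>i. i < n \<Longrightarrow> g i i \<noteq> 0"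
  shows "\<exists>h. \<forall>i<n. \<forall>j<n. (\<Sum>k<n. g i k * h k j) = (if i = j then 1 else 0)"
proof -
  have "\<exists>x. \<forall>i<n. (\<Sum>k<n. g i k * x k) = (if i = j then 1 else 0)" for j
    by (rule upper_triangular_solvable) (use assms in auto)
  then obtain x where "\<forall>j. \<forall>i<n. (\<Sum>k<n. g i k * x j k) = (if i = j then 1 else 0)"
    by metis
  then show ?thesis by (intro exI[of _ "\<lambda>k j. x j k"]) blast
qed

section \<open>A Kronecker curve of upper triangular matrices\<close>

definition monic_degree :: "'a::idom poly \<Rightarrow> nat \<Rightarrow> bool" where
  "monic_degree p d \<longleftrightarrow> degree p = d \<and> lead_coeff p = 1"

lemma monic_degree_monom: "monic_degree (monom 1 d) d"
  by (simp add: monic_degree_def degree_monom_eq)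

lemma monic_degree_one: "monic_degree 1 0"
  by (simp add: monic_degree_def)

lemma monic_degree_add:
  assumes "monic_degree p d" "degree q < d"
  shows "monic_degree (p + q) d"
proof -
  have "degree (p + q) = d" using assms by (simp add: monic_degree_def degree_add_eq_left)
  moreover have "coeff (p + q) d = 1" using assms by (auto simp: monic_degree_def coeff_eq_0)
  ultimately show ?thesis by (simp add: monic_degree_def)
qed

lemma monic_degree_mult:
  assumes "monic_degree p a" "monic_degree q b"
  shows "monic_degree (p * q) (a + b)"
proof -
  have "p \<noteq> 0" "q \<noteq> 0" using assms by (auto simp: monic_degree_def)
  then show ?thesis
    using assms lead_coeff_mult[of p q] by (auto simp: monic_degree_def degree_mult_eq)
qed

lemma monic_degree_power: "monic_degree p d \<Longrightarrow> monic_degree (p ^ k) (k * d)"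
  by (induction k) (simp_all add: monic_degree_one monic_degree_mult)

lemma monic_degree_prod:
  "finite A \<Longrightarrow> (\<And>a. a \<in> A \<Longrightarrow> monic_degree (f a) (d a)) \<Longrightarrow> monic_degree (prod f A) (sum d A)"
  by (induction A rule: finite_induct) (simp_all add: monic_degree_one monic_degree_mult)

definition kron_index :: "nat \<Rightarrow> nat \<Rightarrow> nat \<Rightarrow> nat" where
  "kron_index n i j = i * n + j + 1" \<comment> \<open>the shift keeps \<open>B ^ kron_index n i j\<close> even for even \<open>B\<close>\<close>

definition diag_exp :: "nat \<Rightarrow> nat \<Rightarrow> nat \<Rightarrow> nat" where
  "diag_exp n B i = B ^ kron_index n i i div 2"

definition off_diag_exp :: "nat \<Rightarrow> nat \<Rightarrow> nat \<Rightarrow> nat \<Rightarrow> nat" where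
  "off_diag_exp n B k i = B ^ kron_index n k i - diag_exp n B k"

text \<open>The exponents are chosen so that \<open>(g\<^sub>t\<^sup>T g\<^sub>t)\<^sub>i\<^sub>j\<close> is monic of degree
  \<open>B ^ kron_index n i j\<close> in \<open>t\<close>: for \<open>i < j\<close> its leading term is
  \<open>t ^ diag_exp n B i * t ^ off_diag_exp n B i j\<close>, and the rows \<open>k < i\<close> only contribute
  lower degrees.\<close>
definition curve_entry :: "nat \<Rightarrow> nat \<Rightarrow> nat \<Rightarrow> nat \<Rightarrow> complex poly" where
  "curve_entry n B k i = (if k = i then (if i < n then monom 1 (diag_exp n B i) else 1)
      else if k < i \<and> i < n then monom 1 (off_diag_exp n B k i) - 1 else 0)"

definition gram_entry :: "nat \<Rightarrow> nat \<Rightarrow> nat \<Rightarrow> nat \<Rightarrow> complex poly" where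
  "gram_entry n B i j = (\<Sum>k\<le>i. curve_entry n B k i * curve_entry n B k j)"

definition gram_var :: "nat \<Rightarrow> nat \<Rightarrow> sym2 \<Rightarrow> complex poly" where
  "gram_var n B v = (case Rep_sym2 v of (i, j) \<Rightarrow> gram_entry n B i j)"

lemma curve_entry_below_diag: "i < k \<Longrightarrow> curve_entry n B k i = 0"
  by (simp add: curve_entry_def)

lemma diag_exp_pos: "B \<ge> 2 \<Longrightarrow> diag_exp n B i \<ge> 1"
proof -
  assume B: "B \<ge> 2"
  have "B ^ kron_index n i i \<ge> B ^ 1" using B by (intro power_increasing) (auto simp: kron_index_def)
  then show ?thesis using B by (simp add: diag_exp_def)
qed

lemma two_diag_exp: "even B \<Longrightarrow> 2 * diag_exp n B i = B ^ kron_index n i i"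
  by (simp add: diag_exp_def kron_index_def)

lemma diag_exp_less: "B \<ge> 2 \<Longrightarrow> diag_exp n B i < B ^ kron_index n i i"
  by (simp add: diag_exp_def)

lemma degree_curve_entry_le:
  assumes "k < i" "i < n"
  shows "degree (curve_entry n B k i) \<le> off_diag_exp n B k i"
  using assms by (simp add: curve_entry_def) (metis degree_diff_le degree_1 degree_monom_le le0)

lemma off_diag_exp_less:
  assumes "B \<ge> 2" "k < i" "i \<le> j" "j < n"
  shows "off_diag_exp n B k j < B ^ (i * n)"
proof -
  have "off_diag_exp n B k j < B ^ kron_index n k j"
    using diag_exp_pos[of B n k] assms by (simp add: off_diag_exp_def)
  also have "\<dots> \<le> B ^ (i * n)"
  proof -
    have "(k + 1) * n \<le> i * n" using assms by (intro mult_le_mono1) simp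
    then show ?thesis using assms by (intro power_increasing) (auto simp: kron_index_def)
  qed
  finally show ?thesis .
qed

lemma degree_gram_summand_less:
  assumes B: "B \<ge> 2" and kij: "k < i" "i \<le> j" "j < n"
  shows "degree (curve_entry n B k i * curve_entry n B k j) < B ^ kron_index n i j"
proof -
  have "degree (curve_entry n B k i * curve_entry n B k j) \<le> off_diag_exp n B k i + off_diag_exp n B k j"
    using kij degree_curve_entry_le[of k i n B] degree_curve_entry_le[of k j n B]
    by (meson add_mono degree_mult_le le_less_trans le_trans not_le)
  also have "\<dots> < 2 * B ^ (i * n)"
    using off_diag_exp_less[OF B kij(1) order_refl, of n] off_diag_exp_less[OF B kij] kij by simp
  also have "\<dots> \<le> B ^ (i * n + 1)" using B by simp
  also have "\<dots> \<le> B ^ kron_index n i j" using B by (intro power_increasing) (auto simp: kron_index_def)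
  finally show ?thesis .
qed

lemma monic_degree_gram_diag_summand:
  assumes B: "B \<ge> 2" "even B" and ij: "i \<le> j" "j < n"
  shows "monic_degree (curve_entry n B i i * curve_entry n B i j) (B ^ kron_index n i j)"
proof (cases "i = j")
  case True
  have "curve_entry n B i i * curve_entry n B i j = monom 1 (2 * diag_exp n B i)"
    using True ij by (simp add: curve_entry_def mult_monom mult_2)
  then show ?thesis using True two_diag_exp[OF B(2)] monic_degree_monom by metis
next
  case False
  have "diag_exp n B i < B ^ kron_index n i i" by (rule diag_exp_less[OF B(1)])
  also have "\<dots> \<le> B ^ kron_index n i j" using B ij by (intro power_increasing) (auto simp: kron_index_def)
  finally have less: "diag_exp n B i < B ^ kron_index n i j" .
  then have "curve_entry n B i i * curve_entry n B i j = monom 1 (B ^ kron_index n i j) + - monom 1 (diag_exp n B i)"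
    using False ij by (simp add: curve_entry_def algebra_simps mult_monom off_diag_exp_def)
  moreover have "degree (- monom (1::complex) (diag_exp n B i)) < B ^ kron_index n i j"
    using less by (simp add: degree_monom_eq)
  ultimately show ?thesis
    using monic_degree_add[OF monic_degree_monom] by metis
qed

lemma monic_degree_gram_entry:
  assumes B: "B \<ge> 2" "even B" and ij: "i \<le> j" "j < n"
  shows "monic_degree (gram_entry n B i j) (B ^ kron_index n i j)"
proof -
  have split: "gram_entry n B i j = curve_entry n B i i * curve_entry n B i j
      + (\<Sum>k<i. curve_entry n B k i * curve_entry n B k j)"
    unfolding gram_entry_def by (simp add: lessThan_Suc_atMost[symmetric])
  obtain D where D: "B ^ kron_index n i j = Suc D"
    using B by (cases "B ^ kron_index n i j") auto
  have "degree (\<Sum>k<i. curve_entry n B k i * curve_entry n B k j) \<le> D"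
    by (rule degree_sum_le) (use degree_gram_summand_less[OF B(1) _ ij] D in force)+
  then show ?thesis
    using split D monic_degree_add[OF monic_degree_gram_diag_summand[OF B ij]] by simp
qed

lemma nat_digits_unique:
  "(\<forall>k<R. f k < B) \<Longrightarrow> (\<forall>k<R. g k < B) \<Longrightarrow> (\<Sum>k<R. f k * B ^ k) = (\<Sum>k<R. g k * B ^ k)
    \<Longrightarrow> \<forall>k<R. f k = (g k :: nat)"
proof (induction R arbitrary: f g)
  case 0
  then show ?case by simp
next
  case (Suc R)
  have shift: "(\<Sum>k<Suc R. h k * B ^ k) = h 0 + B * (\<Sum>k<R. h (Suc k) * B ^ k)" for h :: "nat \<Rightarrow> nat"
    by (subst sum.lessThan_Suc_shift) (simp add: sum_distrib_left ac_simps)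
  have digit0: "f 0 < B" "g 0 < B" using Suc.prems by auto
  have eq: "f 0 + B * (\<Sum>k<R. f (Suc k) * B ^ k) = g 0 + B * (\<Sum>k<R. g (Suc k) * B ^ k)"
    using Suc.prems(3) by (simp only: shift)
  then have "(f 0 + B * (\<Sum>k<R. f (Suc k) * B ^ k)) mod B = (g 0 + B * (\<Sum>k<R. g (Suc k) * B ^ k)) mod B"
    by simp
  then have head: "f 0 = g 0" using digit0 by simp
  then have "(\<Sum>k<R. f (Suc k) * B ^ k) = (\<Sum>k<R. g (Suc k) * B ^ k)" using eq digit0 by simp
  moreover have "\<forall>k<R. f (Suc k) < B" "\<forall>k<R. g (Suc k) < B" using Suc.prems by simp_all
  ultimately have "\<forall>k<R. f (Suc k) = g (Suc k)"
    using Suc.IH[of "\<lambda>k. f (Suc k)" "\<lambda>k. g (Suc k)"] by blast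
  then show ?case using head by (auto simp: less_Suc_eq_0_disj)
qed

lemma base_expansion_unique:
  fixes f g e :: "'a \<Rightarrow> nat"
  assumes V: "finite V" "inj_on e V" and f: "\<And>v. v \<in> V \<Longrightarrow> f v < B" and g: "\<And>v. v \<in> V \<Longrightarrow> g v < B"
    and eq: "(\<Sum>v\<in>V. f v * B ^ e v) = (\<Sum>v\<in>V. g v * B ^ e v)" and v: "v \<in> V"
  shows "f v = g v"
proof -
  define R where "R = Suc (Max (e ` V))"
  define digit where "digit h k = (if k \<in> e ` V then h (inv_into V e k) else 0)" for h :: "'a \<Rightarrow> nat" and k
  have expand: "(\<Sum>v\<in>V. h v * B ^ e v) = (\<Sum>k<R. digit h k * B ^ k)" for h
  proof -
    have "(\<Sum>v\<in>V. h v * B ^ e v) = (\<Sum>v\<in>V. digit h (e v) * B ^ e v)"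
      using V by (intro sum.cong refl) (simp add: digit_def)
    also have "\<dots> = (\<Sum>k\<in>e ` V. digit h k * B ^ k)"
      by (simp add: sum.reindex[OF V(2)])
    also have "\<dots> = (\<Sum>k<R. digit h k * B ^ k)"
      by (rule sum.mono_neutral_left) (auto simp: R_def digit_def V(1) less_Suc_eq_le)
    finally show ?thesis .
  qed
  have "B > 0" using f[OF v] by simp
  moreover have "(\<Sum>k<R. digit f k * B ^ k) = (\<Sum>k<R. digit g k * B ^ k)"
    using eq by (simp only: expand)
  ultimately have "\<forall>k<R. digit f k = digit g k"
    by (intro nat_digits_unique) (use f g in \<open>auto simp: digit_def inv_into_into\<close>)
  moreover have "e v < R" using V v by (simp add: R_def less_Suc_eq_le)
  ultimately show ?thesis using V v by (auto simp: digit_def)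
qed

definition sym2_below :: "nat \<Rightarrow> sym2 set" where
  "sym2_below n = {v. snd (Rep_sym2 v) < n}"

definition kron_index_sym2 :: "nat \<Rightarrow> sym2 \<Rightarrow> nat" where
  "kron_index_sym2 n v = kron_index n (fst (Rep_sym2 v)) (snd (Rep_sym2 v))"

definition kron_degree :: "nat \<Rightarrow> nat \<Rightarrow> (sym2 \<Rightarrow>\<^sub>0 nat) \<Rightarrow> nat" where
  "kron_degree n B \<mu> = (\<Sum>v\<in>Poly_Mapping.keys \<mu>. Poly_Mapping.lookup \<mu> v * B ^ kron_index_sym2 n v)"

lemma Rep_sym2_le: "fst (Rep_sym2 v) \<le> snd (Rep_sym2 v)"
  using Rep_sym2[of v] by auto

lemma finite_sym2_below: "finite (sym2_below n)"
proof -
  have "sym2_below n \<subseteq> Rep_sym2 -` ({..n} \<times> {..<n})"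
  proof
    fix v assume "v \<in> sym2_below n"
    then show "v \<in> Rep_sym2 -` ({..n} \<times> {..<n})"
      using Rep_sym2_le[of v] by (cases "Rep_sym2 v") (auto simp: sym2_below_def)
  qed
  moreover have "finite (Rep_sym2 -` ({..n} \<times> {..<n}))"
    by (rule finite_vimageI) (auto intro: injI simp: Rep_sym2_inject)
  ultimately show ?thesis using finite_subset by blast
qed

lemma inj_on_kron_index_sym2: "inj_on (kron_index_sym2 n) (sym2_below n)"
proof (rule inj_onI)
  fix v w assume v: "v \<in> sym2_below n" and w: "w \<in> sym2_below n"
    and eq: "kron_index_sym2 n v = kron_index_sym2 n w"
  obtain a b where v_ab: "Rep_sym2 v = (a, b)" by (cases "Rep_sym2 v")
  obtain c d where w_cd: "Rep_sym2 w = (c, d)" by (cases "Rep_sym2 w")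
  have "b < n" "d < n" using v w v_ab w_cd by (auto simp: sym2_below_def)
  moreover have "a * n + b = c * n + d" using eq v_ab w_cd by (simp add: kron_index_sym2_def kron_index_def)
  then have "(a * n + b) mod n = (c * n + d) mod n" "(a * n + b) div n = (c * n + d) div n"
    by simp_all
  ultimately have "a = c \<and> b = d" by simp
  then show "v = w" using v_ab w_cd by (simp flip: Rep_sym2_inject)
qed

lemma kron_degree_inj:
  assumes keys: "Poly_Mapping.keys \<mu> \<subseteq> sym2_below n" "Poly_Mapping.keys \<nu> \<subseteq> sym2_below n"
    and digits: "\<And>v. Poly_Mapping.lookup \<mu> v < B" "\<And>v. Poly_Mapping.lookup \<nu> v < B"
    and eq: "kron_degree n B \<mu> = kron_degree n B \<nu>"
  shows "\<mu> = \<nu>"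
proof (rule poly_mapping_eqI)
  fix v
  have expand: "kron_degree n B \<kappa> = (\<Sum>w\<in>sym2_below n. Poly_Mapping.lookup \<kappa> w * B ^ kron_index_sym2 n w)"
    if "Poly_Mapping.keys \<kappa> \<subseteq> sym2_below n" for \<kappa>
    unfolding kron_degree_def
    by (rule sum.mono_neutral_left) (use that finite_sym2_below in \<open>auto simp: in_keys_iff\<close>)
  show "Poly_Mapping.lookup \<mu> v = Poly_Mapping.lookup \<nu> v"
  proof (cases "v \<in> sym2_below n")
    case True
    show ?thesis
      by (rule base_expansion_unique[OF finite_sym2_below inj_on_kron_index_sym2 _ _ _ True])
        (use digits eq expand[OF keys(1)] expand[OF keys(2)] in auto)
  next
    case False
    then show ?thesis using keys by (metis in_keys_iff subsetD)
  qed
qed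

lemma monic_degree_monomial_value_gram:
  assumes B: "B \<ge> 2" "even B" and keys: "Poly_Mapping.keys \<mu> \<subseteq> sym2_below n"
  shows "monic_degree (monomial_value (gram_var n B) \<mu>) (kron_degree n B \<mu>)"
  unfolding monomial_value_def kron_degree_def
proof (intro monic_degree_prod monic_degree_power)
  fix v assume v: "v \<in> Poly_Mapping.keys \<mu>"
  obtain i j where ij: "Rep_sym2 v = (i, j)" by (cases "Rep_sym2 v")
  have "i \<le> j" "j < n" using ij Rep_sym2_le[of v] keys v by (auto simp: sym2_below_def)
  then show "monic_degree (gram_var n B v) (B ^ kron_index_sym2 n v)"
    using monic_degree_gram_entry[OF B] ij by (simp add: gram_var_def kron_index_sym2_def)
qed simp

text \<open>The monomials of \<open>u\<close> pull back to polynomials of pairwise distinct degrees,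
  so the leading term of the one of highest degree survives.\<close>
lemma peval_gram_var_nonzero:
  assumes B: "B \<ge> 2" "even B" and u: "u \<noteq> 0"
    and keys: "\<And>\<mu>. \<mu> \<in> Poly_Mapping.keys u \<Longrightarrow> Poly_Mapping.keys \<mu> \<subseteq> sym2_below n"
    and digits: "\<And>\<mu> v. \<mu> \<in> Poly_Mapping.keys u \<Longrightarrow> Poly_Mapping.lookup \<mu> v < B"
  shows "peval (\<lambda>c. [:c:]) (gram_var n B) u \<noteq> 0"
proof -
  let ?K = "Poly_Mapping.keys u"
  let ?term = "\<lambda>\<mu>. monomial_value (gram_var n B) \<mu>"
  define d where "d = Max (kron_degree n B ` ?K)"
  have "d \<in> kron_degree n B ` ?K" unfolding d_def using u by (intro Max_in) auto
  then obtain \<mu>0 where \<mu>0: "\<mu>0 \<in> ?K" "kron_degree n B \<mu>0 = d" by auto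
  have lower: "degree (?term \<mu>) < d" if "\<mu> \<in> ?K - {\<mu>0}" for \<mu>
  proof -
    have "kron_degree n B \<mu> \<le> d" unfolding d_def using that by (intro Max_ge) auto
    moreover have "kron_degree n B \<mu> \<noteq> d"
      using kron_degree_inj[OF keys[of \<mu>] keys[OF \<mu>0(1)] digits[of \<mu>] digits[OF \<mu>0(1)]] \<mu>0 that
      by auto
    ultimately show ?thesis
      using monic_degree_monomial_value_gram[OF B keys] that by (auto simp: monic_degree_def)
  qed
  have "coeff (peval (\<lambda>c. [:c:]) (gram_var n B) u) d = (\<Sum>\<mu>\<in>?K. Poly_Mapping.lookup u \<mu> * coeff (?term \<mu>) d)"
    by (simp add: peval_def coeff_sum)
  also have "\<dots> = Poly_Mapping.lookup u \<mu>0 * coeff (?term \<mu>0) d"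
    using lower by (subst sum.remove[OF finite_keys \<mu>0(1)]) (simp add: coeff_eq_0)
  also have "\<dots> = Poly_Mapping.lookup u \<mu>0"
    using monic_degree_monomial_value_gram[OF B keys[OF \<mu>0(1)]] \<mu>0 by (auto simp: monic_degree_def)
  also have "\<dots> \<noteq> 0" using \<mu>0 by (simp add: in_keys_iff)
  finally show ?thesis by auto
qed

lemma exists_gram_curve_nonvanishing:
  assumes u: "u \<noteq> 0"
  obtains n B where "B \<ge> 2" "peval (\<lambda>c. [:c:]) (gram_var n B) u \<noteq> 0"
proof
  let ?K = "Poly_Mapping.keys u"
  define n where "n = Suc (\<Sum>\<mu>\<in>?K. \<Sum>w\<in>Poly_Mapping.keys \<mu>. snd (Rep_sym2 w))"
  define B where "B = 2 * Suc (\<Sum>\<mu>\<in>?K. \<Sum>w\<in>Poly_Mapping.keys \<mu>. Poly_Mapping.lookup \<mu> w)"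
  have member_le: "h \<mu> w \<le> (\<Sum>\<mu>\<in>?K. \<Sum>w\<in>Poly_Mapping.keys \<mu>. h \<mu> w)"
    if "\<mu> \<in> ?K" "w \<in> Poly_Mapping.keys \<mu>" for \<mu> w and h :: "(sym2 \<Rightarrow>\<^sub>0 nat) \<Rightarrow> sym2 \<Rightarrow> nat"
  proof -
    have "h \<mu> w \<le> (\<Sum>w\<in>Poly_Mapping.keys \<mu>. h \<mu> w)" by (rule member_le_sum) (use that in auto)
    also have "\<dots> \<le> (\<Sum>\<mu>\<in>?K. \<Sum>w\<in>Poly_Mapping.keys \<mu>. h \<mu> w)"
      by (rule member_le_sum[where f = "\<lambda>\<mu>. \<Sum>w\<in>Poly_Mapping.keys \<mu>. h \<mu> w"]) (use that in auto)
    finally show ?thesis .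
  qed
  show "B \<ge> 2" by (simp add: B_def)
  have keys: "Poly_Mapping.keys \<mu> \<subseteq> sym2_below n" if "\<mu> \<in> ?K" for \<mu>
  proof
    fix w assume "w \<in> Poly_Mapping.keys \<mu>"
    then show "w \<in> sym2_below n"
      using member_le[OF that, of w "\<lambda>_ w. snd (Rep_sym2 w)"] by (simp add: sym2_below_def n_def)
  qed
  have digits: "Poly_Mapping.lookup \<mu> w < B" if "\<mu> \<in> ?K" for \<mu> w
  proof (cases "w \<in> Poly_Mapping.keys \<mu>")
    case True
    then show ?thesis using member_le[OF that True, of Poly_Mapping.lookup] by (simp add: B_def)
  next
    case False
    then show ?thesis by (simp add: B_def in_keys_iff)
  qed
  show "peval (\<lambda>c. [:c:]) (gram_var n B) u \<noteq> 0"
    by (rule peval_gram_var_nonzero[OF _ _ u keys digits]) (auto simp: B_def)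
qed

definition curve :: "nat \<Rightarrow> nat \<Rightarrow> complex \<Rightarrow> nat \<Rightarrow> nat \<Rightarrow> complex" where
  "curve n B t k i = poly (curve_entry n B k i) t"

lemma curve_upper: "curve n B t k i \<noteq> 0 \<Longrightarrow> k \<le> i"
  using curve_entry_below_diag[of i k n B] by (force simp: curve_def)

lemma curve_in_GLinf:
  assumes t: "t \<noteq> 0"
  shows "curve n B t \<in> GLinf"
proof -
  have outside: "id_outside n (curve n B t)"
    by (auto simp: id_outside_def curve_def curve_entry_def)
  have "curve n B t i k = 0" if "k < i" for i k
    using curve_upper[of n B t i k] that by auto
  moreover have "curve n B t i i \<noteq> 0" if "i < n" for i
    using t that by (simp add: curve_def curve_entry_def poly_monom)
  ultimately obtain h where h: "\<forall>i<n. \<forall>j<n. (\<Sum>k<n. curve n B t i k * h k j) = (if i = j then 1 else 0)"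
    using upper_triangular_right_inverse[where g = "curve n B t" and n = n] by blast
  define h' where "h' i j = (if i < n \<and> j < n then h i j else if i = j then 1 else 0)" for i j
  have "id_outside n h'" by (auto simp: id_outside_def h'_def)
  moreover have "\<forall>i<n. \<forall>j<n. (\<Sum>k<n. curve n B t i k * h' k j) = (if i = j then 1 else 0)"
    using h by (simp add: h'_def)
  ultimately show ?thesis using outside unfolding GLinf_def by blast
qed

lemma eval_id_gactA_curve:
  "eval_id (gactA (curve n B t) u) = poly (peval (\<lambda>c. [:c:]) (gram_var n B) u) t"
proof -
  have "eval_id (case Rep_sym2 v of (i, j) \<Rightarrow> gvar (curve n B t) i j) = poly (gram_var n B v) t" for v
  proof -
    obtain i j where v: "Rep_sym2 v = (i, j)" by (cases "Rep_sym2 v")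
    have "eval_id (gvar (curve n B t) i j) = (\<Sum>k\<le>i. curve n B t k i * curve n B t k j)"
      by (rule eval_id_gvar) (rule curve_upper)
    also have "\<dots> = poly (gram_entry n B i j) t" by (simp add: gram_entry_def curve_def poly_sum)
    finally show ?thesis using v by (simp add: gram_var_def)
  qed
  then show ?thesis by (simp add: eval_id_gactA poly_peval_const_poly)
qed

section \<open>Interpolating the tensor action along a polynomial curve\<close>

definition lagrange_basis :: "'a::field set \<Rightarrow> 'a \<Rightarrow> 'a poly" where
  "lagrange_basis T a = (\<Prod>b\<in>T - {a}. smult (1 / (a - b)) [:- b, 1:])"

lemma poly_lagrange_basis: "poly (lagrange_basis T a) y = (\<Prod>b\<in>T - {a}. (y - b) / (a - b))"
  unfolding lagrange_basis_def poly_prod by (intro prod.cong refl) (auto simp: divide_simps)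

lemma degree_lagrange_basis:
  assumes "finite T" "a \<in> T"
  shows "degree (lagrange_basis T a) < card T"
proof -
  have "degree (lagrange_basis T a) \<le> (\<Sum>b\<in>T - {a}. degree (smult (1 / (a - b)) [:- b, 1:]))"
    unfolding lagrange_basis_def by (rule degree_prod_sum_le[unfolded o_def]) (use assms in simp)
  also have "\<dots> \<le> (\<Sum>b\<in>T - {a}. 1)"
    by (intro sum_mono) (use degree_smult_le le_trans in fastforce)
  also have "\<dots> < card T" using assms card_gt_0_iff[of T] by auto
  finally show ?thesis .
qed

lemma poly_lagrange_basis_node:
  assumes "finite T" "a \<in> T" "c \<in> T"
  shows "poly (lagrange_basis T a) c = (if a = c then 1 else 0)"
proof (cases "a = c")
  case True
  have "(\<Prod>b\<in>T - {a}. (c - b) / (a - b)) = (\<Prod>b\<in>T - {a}. 1)"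
    using True by (intro prod.cong refl) auto
  then show ?thesis using True by (simp add: poly_lagrange_basis)
next
  case False
  then have "(\<Prod>b\<in>T - {a}. (c - b) / (a - b)) = 0"
    using assms by (intro prod_zero) auto
  then show ?thesis using False by (simp add: poly_lagrange_basis)
qed

lemma lagrange_interpolation:
  fixes P :: "'a::field poly"
  assumes T: "finite T" and deg: "degree P < card T"
  shows "poly P x = (\<Sum>a\<in>T. (\<Prod>b\<in>T - {a}. (x - b) / (a - b)) * poly P a)"
proof -
  define Q where "Q = (\<Sum>a\<in>T. smult (poly P a) (lagrange_basis T a))"
  have "P = Q"
  proof (rule poly_eqI_degree[of T])
    fix c assume c: "c \<in> T"
    have "poly Q c = (\<Sum>a\<in>T. poly P a * (if a = c then 1 else 0))"
      unfolding Q_def by (simp add: poly_sum poly_lagrange_basis_node T c cong: sum.cong)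
    also have "\<dots> = poly P c" using c T by (simp add: if_distrib sum.delta cong: if_cong)
    finally show "poly P c = poly Q c" by simp
  next
    show "degree Q < card T" unfolding Q_def
    proof (rule degree_sum_less)
      show "degree (smult (poly P a) (lagrange_basis T a)) < card T" if "a \<in> T" for a
        using degree_lagrange_basis[OF T that] degree_smult_le le_less_trans by blast
    qed (use deg in simp)
  qed (fact deg)
  then have "poly P x = poly Q x" by simp
  also have "\<dots> = (\<Sum>a\<in>T. (\<Prod>b\<in>T - {a}. (x - b) / (a - b)) * poly P a)"
    unfolding Q_def by (simp add: poly_sum poly_lagrange_basis ac_simps)
  finally show ?thesis .
qed

lemma lookup_tscale: "Poly_Mapping.lookup (tscale c v) k = c * Poly_Mapping.lookup v k"
  by (simp add: tscale_def map.rep_eq when_def)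

lemma finite_tcoef_support:
  assumes upper: "\<And>k i. g k i \<noteq> 0 \<Longrightarrow> k \<le> i"
  shows "finite {u. length u = length w \<and> tcoef g u w \<noteq> 0}"
proof (rule finite_subset)
  show "{u. length u = length w \<and> tcoef g u w \<noteq> 0} \<subseteq> {xs. set xs \<subseteq> {..sum_list w} \<and> length xs = length w}"
  proof
    fix u assume "u \<in> {u. length u = length w \<and> tcoef g u w \<noteq> 0}"
    then have len: "length u = length w" and nz: "tcoef g u w \<noteq> 0" by auto
    have "set u \<subseteq> {..sum_list w}"
    proof
      fix x assume "x \<in> set u"
      then obtain k where k: "k < length u" "u ! k = x" by (auto simp: in_set_conv_nth)
      have "g (u ! k) (w ! k) \<noteq> 0" using nz k len by (auto simp: tcoef_def)
      then have "u ! k \<le> w ! k" by (rule upper)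
      also have "w ! k \<le> sum_list w" using k len by (simp add: elem_le_sum_list)
      finally show "x \<in> {..sum_list w}" using k by simp
    qed
    then show "u \<in> {xs. set xs \<subseteq> {..sum_list w} \<and> length xs = length w}" using len by simp
  qed
qed (rule finite_lists_length_eq, simp)

lemma lookup_tact:
  fixes v :: "('t \<times> nat list) \<Rightarrow>\<^sub>0 complex"
  assumes upper: "\<And>k i. g k i \<noteq> 0 \<Longrightarrow> k \<le> i"
  shows "Poly_Mapping.lookup (tact g v) (s, u) =
    (\<Sum>p\<in>{p \<in> Poly_Mapping.keys v. fst p = s \<and> length (snd p) = length u}.
        Poly_Mapping.lookup v p * tcoef g u (snd p))"
proof -
  have inner: "(\<Sum>u'\<in>{u'. length u' = length w \<and> tcoef g u' w \<noteq> 0}.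
        (c * tcoef g u' w when t = s \<and> u' = u))
      = (if t = s \<and> length w = length u then c * tcoef g u w else 0)" for c t and w :: "nat list"
    using finite_tcoef_support[of g w, OF upper]
    by (cases "length w = length u") (auto simp: when_def sum.delta' intro!: sum.neutral)
  have "Poly_Mapping.lookup (tact g v) (s, u) =
      (\<Sum>p\<in>Poly_Mapping.keys v. if fst p = s \<and> length (snd p) = length u then
        Poly_Mapping.lookup v p * tcoef g u (snd p) else 0)"
    unfolding tact_def by (simp add: lookup_sum lookup_single case_prod_beta inner)
  then show ?thesis by (simp add: sum.inter_filter)
qed

lemma tcoef_one:
  assumes "length u = length w"
  shows "tcoef (\<lambda>k i. if k = i then 1 else 0) u w = (if u = w then 1 else 0)"
proof (cases "u = w")
  case True
  then show ?thesis by (simp add: tcoef_def)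
next
  case False
  then obtain k where k: "k < length w" "u ! k \<noteq> w ! k"
    using assms nth_equalityI by metis
  then have "tcoef (\<lambda>k i. if k = i then 1 else 0) u w = 0"
    unfolding tcoef_def by (intro prod_zero) auto
  then show ?thesis using False by simp
qed

definition tact_coeff_poly ::
  "(nat \<Rightarrow> nat \<Rightarrow> complex poly) \<Rightarrow> (('t \<times> nat list) \<Rightarrow>\<^sub>0 complex) \<Rightarrow> 't \<Rightarrow> nat list \<Rightarrow> complex poly" where
  "tact_coeff_poly G v s u = (\<Sum>p\<in>{p \<in> Poly_Mapping.keys v. fst p = s \<and> length (snd p) = length u}.
      smult (Poly_Mapping.lookup v p) (\<Prod>k<length u. G (u ! k) (snd p ! k)))"

lemma poly_tact_coeff_poly:
  "poly (tact_coeff_poly G v s u) t = (\<Sum>p\<in>{p \<in> Poly_Mapping.keys v. fst p = s \<and> length (snd p) = length u}.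
      Poly_Mapping.lookup v p * tcoef (\<lambda>k i. poly (G k i) t) u (snd p))"
  unfolding tact_coeff_poly_def poly_sum by (intro sum.cong refl) (simp add: poly_prod tcoef_def)

lemma degree_tact_coeff_poly:
  assumes deg: "\<And>k i. degree (G k i) \<le> D"
  shows "degree (tact_coeff_poly G v s u) \<le> (\<Sum>p\<in>Poly_Mapping.keys v. length (snd p)) * D"
  unfolding tact_coeff_poly_def
proof (rule degree_sum_le)
  fix p assume p: "p \<in> {p \<in> Poly_Mapping.keys v. fst p = s \<and> length (snd p) = length u}"
  have "degree (\<Prod>k<length u. G (u ! k) (snd p ! k)) \<le> (\<Sum>k<length u. degree (G (u ! k) (snd p ! k)))"
    by (rule degree_prod_sum_le[unfolded o_def]) simp
  also have "\<dots> \<le> length (snd p) * D"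
    using p sum_mono[of "{..<length u}" "\<lambda>k. degree (G (u ! k) (snd p ! k))" "\<lambda>_. D"] deg by simp
  also have "\<dots> \<le> (\<Sum>p\<in>Poly_Mapping.keys v. length (snd p)) * D"
    using p by (intro mult_le_mono1 member_le_sum) auto
  finally show "degree (smult (Poly_Mapping.lookup v p) (\<Prod>k<length u. G (u ! k) (snd p ! k)))
      \<le> (\<Sum>p\<in>Poly_Mapping.keys v. length (snd p)) * D"
    using degree_smult_le le_trans by blast
qed simp

text \<open>Each coordinate of \<open>g\<^sub>t v\<close> is a polynomial in \<open>t\<close> (\<open>tact_coeff_poly\<close>) of degree at most
  \<open>D\<close> times the total tensor degree of \<open>v\<close>, so \<open>card T\<close> nodes determine its value at \<open>t = 1\<close>.\<close>
lemma tact_interpolation: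
  fixes G :: "nat \<Rightarrow> nat \<Rightarrow> complex poly" and v :: "('t \<times> nat list) \<Rightarrow>\<^sub>0 complex"
  assumes upper: "\<And>k i. i < k \<Longrightarrow> G k i = 0"
    and at_one: "\<And>k i. poly (G k i) 1 = (if k = i then 1 else 0)"
    and deg: "\<And>k i. degree (G k i) \<le> D"
    and T: "finite T" "card T = Suc ((\<Sum>p\<in>Poly_Mapping.keys v. length (snd p)) * D)"
  shows "v = (\<Sum>a\<in>T. tscale (\<Prod>b\<in>T - {a}. (1 - b) / (a - b)) (tact (\<lambda>k i. poly (G k i) a) v))"
proof (rule poly_mapping_eqI)
  fix x :: "'t \<times> nat list"
  obtain s u where x: "x = (s, u)" by (cases x)
  have upper_at: "poly (G k i) t \<noteq> 0 \<Longrightarrow> k \<le> i" for k i t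
    using upper[of i k] by (cases "i < k") auto
  have coordinate: "Poly_Mapping.lookup (tact (\<lambda>k i. poly (G k i) t) v) x = poly (tact_coeff_poly G v s u) t" for t
    using lookup_tact[of "\<lambda>k i. poly (G k i) t", OF upper_at] by (simp add: x poly_tact_coeff_poly)
  let ?interp = "\<Sum>a\<in>T. tscale (\<Prod>b\<in>T - {a}. (1 - b) / (a - b)) (tact (\<lambda>k i. poly (G k i) a) v)"
  have "Poly_Mapping.lookup ?interp x = (\<Sum>a\<in>T. (\<Prod>b\<in>T - {a}. (1 - b) / (a - b)) * poly (tact_coeff_poly G v s u) a)"
    using coordinate by (simp add: lookup_sum lookup_tscale)
  also have "\<dots> = poly (tact_coeff_poly G v s u) 1"
    using T degree_tact_coeff_poly[where G = G and D = D and v = v and s = s and u = u, OF deg]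
    by (intro lagrange_interpolation[symmetric]) auto
  also have "\<dots> = (\<Sum>p\<in>{p \<in> Poly_Mapping.keys v. fst p = s \<and> length (snd p) = length u}.
      if p = (s, u) then Poly_Mapping.lookup v p else 0)"
    unfolding poly_tact_coeff_poly at_one by (intro sum.cong refl) (auto simp: tcoef_one)
  also have "\<dots> = Poly_Mapping.lookup v x"
    by (simp add: x sum.delta' in_keys_iff)
  finally show "Poly_Mapping.lookup v x = Poly_Mapping.lookup ?interp x" by simp
qed

lemma curve_entry_at_one: "poly (curve_entry n B k i) 1 = (if k = i then 1 else 0)"
  by (simp add: curve_entry_def poly_monom)

lemma degree_curve_entry:
  assumes B: "B > 0"
  shows "degree (curve_entry n B k i) \<le> B ^ (n * n + n)"
proof -
  have "B ^ kron_index n k i \<le> B ^ (n * n + n)" if "k \<le> i" "i < n"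
  proof -
    have "k * n \<le> n * n" using that by (simp add: mult_le_mono1)
    then have "kron_index n k i \<le> n * n + n" unfolding kron_index_def using that by linarith
    then show ?thesis using B by (intro power_increasing) auto
  qed
  moreover have "degree (curve_entry n B k i) \<le> (if k \<le> i \<and> i < n then B ^ kron_index n k i else 0)"
    unfolding curve_entry_def diag_exp_def off_diag_exp_def
    by (auto simp: degree_monom_eq intro: order.trans[OF degree_diff_le])
  ultimately show ?thesis by (auto split: if_splits)
qed

section \<open>Modules with a polynomial action\<close>

lemma infinite_non_roots:
  fixes P :: "'a::{idom, ring_char_0} poly"
  assumes "P \<noteq> 0"
  shows "infinite {t. t \<noteq> 0 \<and> poly P t \<noteq> 0}"
proof -
  have "finite (UNIV - {t. t \<noteq> 0 \<and> poly P t \<noteq> 0})"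
    by (rule finite_subset[of _ "insert 0 {t. poly P t = 0}"]) (use poly_roots_finite[OF assms] in auto)
  then show ?thesis using infinite_UNIV_char_0 by (metis Diff_infinite_finite finite_Diff2)
qed

lemma annihilator_if_tensor_frac_zero:
  fixes smult :: "polyA \<Rightarrow> 'm::ab_group_add \<Rightarrow> 'm"
  assumes M: "module smult" and "tensor_frac_zero smult"
  obtains u where "u \<noteq> 0" "smult u m = 0"
proof -
  have "loc_rel smult (m, 1) (0, 1)"
    using assms(2) unfolding tensor_frac_zero_def by simp
  then obtain u where "u \<noteq> 0" "smult u (smult 1 m - smult 1 0) = 0"
    unfolding loc_rel_def by auto
  then show ?thesis
    using that M by (simp add: module.scale_one module.scale_zero_right)
qed

lemma act_curve_in_ideal_times:
  fixes smult :: "polyA \<Rightarrow> 'm::ab_group_add \<Rightarrow> 'm"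
  assumes M: "module smult" and act: "compatible_GL_action smult act"
    and ann: "smult u m = 0" and t: "t \<noteq> 0"
    and nonzero: "poly (peval (\<lambda>c. [:c:]) (gram_var n B) u) t \<noteq> 0"
  shows "act (curve n B t) m \<in> ideal_times smult max_ideal"
proof (rule in_ideal_times_max_ideal_if_annihilated[OF M])
  have GL: "curve n B t \<in> GLinf" by (rule curve_in_GLinf[OF t])
  have "act (curve n B t) 0 = 0"
    using act GL unfolding compatible_GL_action_def by (metis add_cancel_left_left add_0)
  then show "smult (gactA (curve n B t) u) (act (curve n B t) m) = 0"
    using act GL ann unfolding compatible_GL_action_def by metis
  show "eval_id (gactA (curve n B t) u) \<noteq> 0"
    using nonzero by (simp add: eval_id_gactA_curve)
qed

lemma additive_on_sum:
  fixes phi :: "'a::comm_monoid_add \<Rightarrow> 'b::ab_group_add"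
  assumes zero: "0 \<in> N" and closed: "\<forall>v\<in>N. \<forall>v'\<in>N. v + v' \<in> N"
    and additive: "\<forall>v\<in>N. \<forall>v'\<in>N. phi (v + v') = phi v + phi v'" and f: "\<forall>a\<in>A. f a \<in> N"
  shows "phi (sum f A) = (\<Sum>a\<in>A. phi (f a))"
proof -
  have "phi 0 = 0" using zero additive by (metis add_cancel_left_left add_0)
  have "phi (sum f A) = (\<Sum>a\<in>A. phi (f a)) \<and> sum f A \<in> N"
    using f by (induction A rule: infinite_finite_induct) (simp_all add: \<open>phi 0 = 0\<close> zero closed additive)
  then show ?thesis ..
qed

lemma polynomial_rep_curve_interpolation:
  fixes smult :: "polyA \<Rightarrow> 'm::ab_group_add \<Rightarrow> 'm" and deg :: "'t \<Rightarrow> nat"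
  assumes rep: "polynomial_rep_via deg smult act" and B: "B > 0"
    and nodes: "infinite S" "0 \<notin> S"
  shows "\<exists>T c. finite T \<and> T \<subseteq> S \<and> m = (\<Sum>a\<in>T. smult (constA (c a)) (act (curve n B a) m))"
proof -
  obtain N :: "(('t \<times> nat list) \<Rightarrow>\<^sub>0 complex) set" and phi
    where N: "0 \<in> N" "\<forall>v\<in>N. \<forall>v'\<in>N. v + v' \<in> N" "\<forall>c. \<forall>v\<in>N. tscale c v \<in> N"
      "\<forall>g\<in>GLinf. \<forall>v\<in>N. tact g v \<in> N"
    and phi: "\<forall>v\<in>N. \<forall>v'\<in>N. phi (v + v') = phi v + phi v'"
      "\<forall>c. \<forall>v\<in>N. phi (tscale c v) = smult (constA c) (phi v)"
      "\<forall>g\<in>GLinf. \<forall>v\<in>N. phi (tact g v) = act g (phi v)" "phi ` N = UNIV"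
    using rep unfolding polynomial_rep_via_def by (elim exE conjE) (rule that; assumption)
  obtain v where v: "v \<in> N" "phi v = m" using phi(4) by (metis UNIV_I imageE)
  obtain T where T: "finite T" "card T = Suc ((\<Sum>p\<in>Poly_Mapping.keys v. length (snd p)) * B ^ (n * n + n))"
      "T \<subseteq> S"
    using infinite_arbitrarily_large[OF nodes(1)] by blast
  define c where "c a = (\<Prod>b\<in>T - {a}. (1 - b) / (a - b))" for a
  have GL: "curve n B a \<in> GLinf" if "a \<in> T" for a
    using that T(3) nodes(2) by (intro curve_in_GLinf) auto
  have interp: "v = (\<Sum>a\<in>T. tscale (c a) (tact (curve n B a) v))"
    unfolding c_def curve_def
    by (rule tact_interpolation[OF curve_entry_below_diag curve_entry_at_one degree_curve_entry[OF B] T(1,2)])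
  have summands: "\<forall>a\<in>T. tscale (c a) (tact (curve n B a) v) \<in> N"
    using GL N(3,4) v(1) by blast
  have "m = phi v" using v(2) by simp
  also have "\<dots> = phi (\<Sum>a\<in>T. tscale (c a) (tact (curve n B a) v))"
    by (rule arg_cong[OF interp])
  also have "\<dots> = (\<Sum>a\<in>T. phi (tscale (c a) (tact (curve n B a) v)))"
    using additive_on_sum[OF N(1,2) phi(1) summands] .
  also have "\<dots> = (\<Sum>a\<in>T. smult (constA (c a)) (act (curve n B a) m))"
    using GL N(4) phi(2,3) v by (intro sum.cong refl) simp
  finally show ?thesis using T(1,3) by blast
qed

theorem mainTheorem15:
  fixes smult :: "polyA \<Rightarrow> 'm::ab_group_add \<Rightarrow> 'm"
    and act :: "(nat \<Rightarrow> nat \<Rightarrow> complex) \<Rightarrow> 'm \<Rightarrow> 'm"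
    and deg :: "'t \<Rightarrow> nat"
  assumes "module smult"
    and "compatible_GL_action smult act"
    and "polynomial_rep_via deg smult act"
    and "tensor_frac_zero smult"
  shows "ideal_times smult max_ideal = UNIV"
proof -
  have "m \<in> ideal_times smult max_ideal" for m
  proof -
    obtain u where u: "u \<noteq> 0" "smult u m = 0"
      using annihilator_if_tensor_frac_zero[OF assms(1,4)] .
    obtain n B where B: "B \<ge> 2" and P: "peval (\<lambda>c. [:c:]) (gram_var n B) u \<noteq> 0"
      using exists_gram_curve_nonvanishing[OF u(1)] .
    let ?S = "{t. t \<noteq> 0 \<and> poly (peval (\<lambda>c. [:c:]) (gram_var n B) u) t \<noteq> 0}"
    have "\<exists>T c. finite T \<and> T \<subseteq> ?S \<and> m = (\<Sum>a\<in>T. smult (constA (c a)) (act (curve n B a) m))"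
      by (rule polynomial_rep_curve_interpolation[OF assms(3)]) (use B infinite_non_roots[OF P] in auto)
    then obtain T c where T: "finite T" "T \<subseteq> ?S"
      and m: "m = (\<Sum>a\<in>T. smult (constA (c a)) (act (curve n B a) m))"
      by blast
    have "act (curve n B a) m \<in> ideal_times smult max_ideal" if "a \<in> T" for a
      using act_curve_in_ideal_times[OF assms(1,2) u(2)] that T(2) by blast
    then show ?thesis
      unfolding ideal_times_def
      by (subst m) (intro module.span_sum[OF assms(1)] module.span_scale[OF assms(1)])
  qed
  then show ?thesis by auto
qed

end
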